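(* Let $\Omega=\{0,1\}^{\mathbb N_0}$ with canonical projections $X_i$, $i\in\mathbb N_0$, $\mathcal F=\sigma(X_i:i\in\mathbb N_0)$, and $\mathbb P=\mathrm{Ber}(1/2)\times\prod_{n\in\mathbb N}\mathrm{Ber}(2^{-n})$ (so the $X_i$ are independent, $\mathbb P(X_0=1)=1/2$, $\mathbb P(X_n=1)=2^{-n}$ for $n\ge1$). For $n\in\mathbb N_0$ let $Y_n:=\max(X_0,X_n)$ and $\mathcal B_n:=\sigma(\sigma(Y_n)\cup\mathcal N)$ (so $\mathcal B_0=\sigma(\sigma(X_0)\cup\mathcal N)$). Then the sequence $(\mathcal B_n)_{n\in\mathbb N}$ is not ultimately equal to $\mathcal B_0$, and for every $p\in(1,\infty)$, $\|\mathbb P_{\mathcal B_n}-\mathbb P_{\mathcal B_0}\|_{L^p\to L^p}\to0$ as $n\to\infty$. More precisely, there is $C_p\in(0,\infty)$ depending only on $p$ such that $\mathbb E^{\mathbb P}|\mathbb P_{\mathcal B_n}f-\mathbb P_{\mathcal B_0}f|^p\le C_p\,2^{-n((p-1)\wedge1)}\,\mathbb E^{\mathbb P}|f|^p$ for all $f\in L^p(\mathbb P)$ and $n\in\mathbb N$.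
   Context: $\mathrm{Ber}(r)$ denotes the Bernoulli law on $\{0,1\}$ with $\mathrm{Ber}(r)(\{1\})=r$. $\mathcal N:=\{F\in\mathcal F:\mathbb P(F)=0\}$. For a sub-$\sigma$-field $\mathcal A$, $\mathbb P_{\mathcal A}f:=\mathbb E^{\mathbb P}[f\mid\mathcal A]$, viewed as a bounded linear operator on the real normed space $L^p(\mathbb P)$, and $\|\cdot\|_{L^p\to L^p}$ is the operator norm. *)

theory Defs
  imports "HOL-Probability.Probability"
begin

text \<open>Bernoulli parameters: Ber(1/2) for index 0, Ber(2^-n) for n >= 1.
  The value 1 of Ber is rendered as True.\<close>
definition bern_param :: "nat \<Rightarrow> real" where
  "bern_param i = (if i = 0 then 1/2 else 1 / 2 ^ i)"

text \<open>The product probability space on Omega = bool^N0; X_i is the projection omega i.\<close>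
definition PP :: "(nat \<Rightarrow> bool) measure" where
  "PP = PiM UNIV (\<lambda>i. measure_pmf (bernoulli_pmf (bern_param i)))"

definition Y :: "nat \<Rightarrow> (nat \<Rightarrow> bool) \<Rightarrow> bool" where
  "Y n \<omega> = (\<omega> 0 \<or> \<omega> n)"

definition BB :: "nat \<Rightarrow> (nat \<Rightarrow> bool) measure" where
  "BB n = sigma (space PP) ({Y n -` A \<inter> space PP | A. A \<subseteq> (UNIV :: bool set)} \<union> null_sets PP)"

definition Lp_fun :: "real \<Rightarrow> ((nat \<Rightarrow> bool) \<Rightarrow> real) \<Rightarrow> bool" where
  "Lp_fun p f \<longleftrightarrow> f \<in> borel_measurable PP \<and> integrable PP (\<lambda>x. \<bar>f x\<bar> powr p)"

definition cond_diff_opnorm :: "real \<Rightarrow> nat \<Rightarrow> real" where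
  "cond_diff_opnorm p n =
     (SUP f \<in> {f. Lp_fun p f \<and> (\<integral>x. \<bar>f x\<bar> powr p \<partial>PP) \<le> 1}.
        (\<integral>x. \<bar>real_cond_exp PP (BB n) f x - real_cond_exp PP (BB 0) f x\<bar> powr p \<partial>PP) powr (1 / p))"

end

theory Submission
  imports Defs
begin

text \<open>Up to null sets, B_n is generated by the single event S_n = {X_0 = 1 or X_n = 1}, so
  P_{B_n} f takes just two values: the averages of f over S_n and over its complement. Hence
  P_{B_n} f - P_{B_0} f is constant on each of the cells {X_0 = 1}, {X_0 = 0, X_n = 1} and
  {X_0 = 0, X_n = 0}, of probabilities 1/2, \<delta> = 2^-(n+1) and 1/2 - \<delta>. By Hoelder the integral
  of f over the small cell is at most \<delta>^(1-1/p) ||f||_p; this makes the difference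
  O(\<delta>^(1-1/p) ||f||_p) on the two large cells and O(||f||_p) on the small one, so that
  E |P_{B_n} f - P_{B_0} f|^p = O((\<delta>^(p-1) + \<delta>) E |f|^p). Conversely {X_0 = 1} lies in B_0 but
  differs by a non-null set from each of {}, S_n, its complement and the whole space, so it is not
  in B_n.\<close>

definition ae_closure :: "'a measure \<Rightarrow> 'a set set \<Rightarrow> 'a set set" where
  "ae_closure M \<Sigma> = {A \<in> sets M. \<exists>T\<in>\<Sigma>. sym_diff A T \<in> null_sets M}"

lemma sigma_algebra_ae_closure:
  assumes \<Sigma>: "sigma_algebra (space M) \<Sigma>" and sub: "\<Sigma> \<subseteq> sets M"
  shows "sigma_algebra (space M) (ae_closure M \<Sigma>)"
  unfolding sigma_algebra_iff2
proof (intro conjI allI ballI impI)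
  interpret \<Sigma>: sigma_algebra "space M" \<Sigma> by (rule \<Sigma>)
  show "ae_closure M \<Sigma> \<subseteq> Pow (space M)"
    using sets.sets_into_space by (auto simp: ae_closure_def)
  show "{} \<in> ae_closure M \<Sigma>"
    unfolding ae_closure_def by (auto intro!: bexI[of _ "{}"])
  fix A assume "A \<in> ae_closure M \<Sigma>"
  then obtain T where A: "A \<in> sets M" and T: "T \<in> \<Sigma>" and AT: "sym_diff A T \<in> null_sets M"
    unfolding ae_closure_def by blast
  have "sym_diff (space M - A) (space M - T) = sym_diff A T"
    using sets.sets_into_space[OF A] \<Sigma>.sets_into_space T by blast
  then show "space M - A \<in> ae_closure M \<Sigma>"
    using A T AT unfolding ae_closure_def by (auto intro!: bexI[of _ "space M - T"])
next
  interpret \<Sigma>: sigma_algebra "space M" \<Sigma> by (rule \<Sigma>)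
  fix A :: "nat \<Rightarrow> _" assume "range A \<subseteq> ae_closure M \<Sigma>"
  then have "\<forall>i. \<exists>T. A i \<in> sets M \<and> T \<in> \<Sigma> \<and> sym_diff (A i) T \<in> null_sets M"
    unfolding ae_closure_def by blast
  then obtain T where A: "\<And>i. A i \<in> sets M" and T: "\<And>i. T i \<in> \<Sigma>"
    and AT: "\<And>i. sym_diff (A i) (T i) \<in> null_sets M"
    by metis
  have "sym_diff (\<Union>i. A i) (\<Union>i. T i) \<in> null_sets M"
  proof (rule null_sets_subset)
    show "(\<Union>i. sym_diff (A i) (T i)) \<in> null_sets M" using AT by blast
    show "sym_diff (\<Union>i. A i) (\<Union>i. T i) \<in> sets M"
      using A T sub by blast
  qed blast
  then show "(\<Union>i. A i) \<in> ae_closure M \<Sigma>"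
    using A T unfolding ae_closure_def by (auto intro!: bexI[of _ "\<Union>i. T i"])
qed

lemma set_integral_Un_of_integrable:
  fixes f :: "'a \<Rightarrow> real"
  assumes "integrable M f" "A \<in> sets M" "B \<in> sets M" "A \<inter> B = {}"
  shows "(\<integral>x\<in>A \<union> B. f x \<partial>M) = (\<integral>x\<in>A. f x \<partial>M) + (\<integral>x\<in>B. f x \<partial>M)"
  using assms integrable_mult_indicator[OF assms(2,1)] integrable_mult_indicator[OF assms(3,1)]
  by (intro set_integral_Un) (simp_all add: set_integrable_def)

text \<open>For \<open>prob T = 0\<close> both sides vanish, the left one because \<open>x / 0 = 0\<close>.\<close>

lemma (in prob_space) set_integral_div_prob_mult:
  assumes "T \<in> sets M"
  shows "(\<integral>x\<in>T. f x \<partial>M) / prob T * prob T = (\<integral>x\<in>T. f x \<partial>M)"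
proof (cases "prob T = 0")
  case True
  then have "AE x in M. indicator T x *\<^sub>R f x = 0"
    using prob_eq_0[OF assms] by (auto elim: AE_mp)
  then show ?thesis
    by (simp add: set_lebesgue_integral_def integral_eq_zero_AE)
qed simp

lemma (in prob_space) real_cond_exp_two_cells:
  fixes f :: "'a \<Rightarrow> real"
  assumes F: "subalgebra M F" and S: "S \<in> sets F"
    and ae: "sets F \<subseteq> ae_closure M {{}, S, space M - S, space M}"
    and f: "integrable M f"
  shows "AE x in M. real_cond_exp M F f x =
    (if x \<in> S then (\<integral>y\<in>S. f y \<partial>M) / prob S else (\<integral>y\<in>space M - S. f y \<partial>M) / prob (space M - S))"
    (is "AE x in M. _ = ?g x")
proof -
  interpret finite_measure_subalgebra M F
    by unfold_locales (rule F)
  have SM: "S \<in> sets M" and SM': "space M - S \<in> sets M"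
    using S F by (auto simp: subalgebra_def)
  have g_meas: "?g \<in> borel_measurable F"
    using S by measurable
  have g_int: "integrable M ?g"
    using SM by (intro integrable_const_bound[where B = "\<bar>(\<integral>y\<in>S. f y \<partial>M) / prob S\<bar>
      + \<bar>(\<integral>y\<in>space M - S. f y \<partial>M) / prob (space M - S)\<bar>"]) auto
  have on_cells: "(\<integral>x\<in>T. f x \<partial>M) = (\<integral>x\<in>T. ?g x \<partial>M)"
    if "T \<in> {{}, S, space M - S, space M}" for T
  proof -
    have cell: "(\<integral>x\<in>T. ?g x \<partial>M) = (\<integral>x\<in>T. f x \<partial>M)"
      if T: "T \<in> {S, space M - S}" for T
    proof -
      have "(\<integral>x\<in>T. ?g x \<partial>M) = (\<integral>x\<in>T. (\<integral>y\<in>T. f y \<partial>M) / prob T \<partial>M)"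
        using T by (intro set_lebesgue_integral_cong) (use SM in auto)
      also have "\<dots> = (\<integral>x\<in>T. f x \<partial>M) / prob T * prob T"
        using T SM SM' by (subst set_integral_const) auto
      also have "\<dots> = (\<integral>x\<in>T. f x \<partial>M)"
        using T SM SM' by (intro set_integral_div_prob_mult) auto
      finally show ?thesis .
    qed
    have split_space: "(\<integral>x\<in>space M. h x \<partial>M) = (\<integral>x\<in>S. h x \<partial>M) + (\<integral>x\<in>space M - S. h x \<partial>M)"
      if "integrable M h" for h :: "'a \<Rightarrow> real"
      using set_integral_Un_of_integrable[OF that SM SM'] SM by (simp add: Un_absorb1 sets.sets_into_space)
    from that show ?thesis
      using cell[of S] cell[of "space M - S"] split_space[OF f] split_space[OF g_int]
      by (auto simp: set_lebesgue_integral_def)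
  qed
  show ?thesis
  proof (rule real_cond_exp_charact[OF _ f g_int g_meas])
    fix A assume "A \<in> sets F"
    with ae obtain T where A: "A \<in> sets M" and T: "T \<in> {{}, S, space M - S, space M}"
      and AT: "sym_diff A T \<in> null_sets M"
      unfolding ae_closure_def by blast
    have TM: "T \<in> sets M" using T SM SM' by auto
    have "(\<integral>x\<in>A. f x \<partial>M) = (\<integral>x\<in>T. f x \<partial>M)"
      by (rule set_integral_null_delta[OF f A TM AT])
    also have "\<dots> = (\<integral>x\<in>T. ?g x \<partial>M)" by (rule on_cells[OF T])
    also have "\<dots> = (\<integral>x\<in>A. ?g x \<partial>M)"
      by (rule set_integral_null_delta[OF g_int A TM AT, symmetric])
    finally show "(\<integral>x\<in>A. f x \<partial>M) = (\<integral>x\<in>A. ?g x \<partial>M)" .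
  qed
qed

lemma Youngs_inequality_scaled:
  fixes p q a b \<alpha> \<beta> :: real
  assumes "p > 1" "q > 1" "1/p + 1/q = 1" "a \<ge> 0" "b \<ge> 0" "\<alpha> > 0" "\<beta> > 0"
  shows "a * b \<le> \<alpha> * \<beta> * (a powr p / (p * \<alpha> powr p) + b powr q / (q * \<beta> powr q))"
proof -
  have "a * b = \<alpha> * \<beta> * ((a / \<alpha>) * (b / \<beta>))"
    using assms by (simp add: field_simps)
  also have "\<dots> \<le> \<alpha> * \<beta> * ((a / \<alpha>) powr p / p + (b / \<beta>) powr q / q)"
    using assms by (intro mult_left_mono Youngs_inequality) auto
  also have "\<dots> = \<alpha> * \<beta> * (a powr p / (p * \<alpha> powr p) + b powr q / (q * \<beta> powr q))"
    using assms by (simp add: powr_divide mult_ac)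
  finally show ?thesis .
qed

lemma (in finite_measure) integrable_of_integrable_powr:
  fixes f :: "'a \<Rightarrow> real"
  assumes "p \<ge> 1" "f \<in> borel_measurable M" "integrable M (\<lambda>x. \<bar>f x\<bar> powr p)"
  shows "integrable M f"
proof (rule Bochner_Integration.integrable_bound)
  show "integrable M (\<lambda>x. 1 + \<bar>f x\<bar> powr p)" using assms(3) by simp
  have "\<bar>f x\<bar> \<le> 1 + \<bar>f x\<bar> powr p" for x
  proof (cases "\<bar>f x\<bar> \<le> 1")
    case False
    then have "\<bar>f x\<bar> powr 1 \<le> \<bar>f x\<bar> powr p" using assms(1) by (intro powr_mono) auto
    then show ?thesis using False by simp
  qed (simp add: add_increasing2)
  then show "AE x in M. norm (f x) \<le> norm (1 + \<bar>f x\<bar> powr p)" by simp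
qed (rule assms(2))

lemma (in finite_measure) abs_set_integral_le_powr:
  fixes f :: "'a \<Rightarrow> real"
  assumes p: "p > 1" and f: "f \<in> borel_measurable M" "integrable M (\<lambda>x. \<bar>f x\<bar> powr p)"
    and A: "A \<in> sets M" "measure M A > 0"
  shows "\<bar>\<integral>x\<in>A. f x \<partial>M\<bar> \<le> (\<integral>x. \<bar>f x\<bar> powr p \<partial>M) powr (1/p) * measure M A powr (1 - 1/p)"
proof -
  define F where "F = (\<integral>x. \<bar>f x\<bar> powr p \<partial>M)"
  define q where "q = p / (p - 1)"
  have q1: "q > 1" and pq: "1/p + 1/q = 1"
    using p unfolding q_def by (simp_all add: field_simps)
  then have q_conj: "1/q = 1 - 1/p" by simp
  have f_int: "integrable M f"
    using p by (intro integrable_of_integrable_powr[OF _ f]) simp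
  have ind_int: "integrable M (indicator A :: 'a \<Rightarrow> real)"
    using A(1) by (rule integrable_real_indicator) (simp add: less_top[symmetric])
  have abs_int: "\<bar>\<integral>x\<in>A. f x \<partial>M\<bar> \<le> (\<integral>x. indicator A x * \<bar>f x\<bar> \<partial>M)"
  proof -
    have "\<bar>\<integral>x\<in>A. f x \<partial>M\<bar> \<le> (\<integral>x. norm (indicator A x * f x) \<partial>M)"
      using integral_norm_bound[of M "\<lambda>x. indicator A x * f x"] by (simp add: set_lebesgue_integral_def)
    also have "\<dots> = (\<integral>x. indicator A x * \<bar>f x\<bar> \<partial>M)"
      by (intro Bochner_Integration.integral_cong) (auto simp: abs_mult)
    finally show ?thesis .
  qed
  show ?thesis
  proof (cases "F = 0")
    case True
    have "AE x in M. \<bar>f x\<bar> powr p = 0"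
      using True f unfolding F_def by (subst integral_nonneg_eq_0_iff_AE[symmetric]) auto
    then have "AE x in M. indicator A x * \<bar>f x\<bar> = 0"
      by (rule AE_mp) (auto intro!: AE_I2)
    then have "(\<integral>x. indicator A x * \<bar>f x\<bar> \<partial>M) = 0"
      by (rule integral_eq_zero_AE)
    then show ?thesis using abs_int by simp
  next
    case False
    then have F: "F > 0"
      unfolding F_def by (simp add: order_less_le Bochner_Integration.integral_nonneg)
    define \<alpha> where "\<alpha> = F powr (1/p)"
    define \<beta> where "\<beta> = measure M A powr (1/q)"
    have \<alpha>: "\<alpha> > 0" "\<alpha> powr p = F"
      unfolding \<alpha>_def using p F by (simp_all add: powr_powr)
    have \<beta>: "\<beta> > 0" "\<beta> powr q = measure M A"
      unfolding \<beta>_def using q1 A(2) by (simp_all add: powr_powr)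
    have young: "indicator A x * \<bar>f x\<bar>
        \<le> \<alpha> * \<beta> * (\<bar>f x\<bar> powr p / (p * F) + indicator A x / (q * measure M A))" for x
    proof -
      have "indicator A x powr q = (indicator A x :: real)"
        by (cases "x \<in> A") simp_all
      then show ?thesis
        using Youngs_inequality_scaled[OF p q1 pq, of "\<bar>f x\<bar>" "indicator A x" \<alpha> \<beta>] \<alpha> \<beta>
        by (simp add: mult.commute)
    qed
    have "(\<integral>x. indicator A x * \<bar>f x\<bar> \<partial>M)
        \<le> (\<integral>x. \<alpha> * \<beta> * (\<bar>f x\<bar> powr p / (p * F) + indicator A x / (q * measure M A)) \<partial>M)"
      using f(2) ind_int integrable_mult_indicator[OF A(1) integrable_abs[OF f_int]]
      by (intro integral_mono young) simp_all
    also have "\<dots> = \<alpha> * \<beta> * (1/p + 1/q)"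
      using f(2) ind_int F A unfolding F_def by (simp add: Int_absorb2 sets.sets_into_space)
    finally show ?thesis
      using abs_int unfolding \<alpha>_def \<beta>_def F_def q_conj by simp
  qed
qed

lemma weighted_powr_sum_le:
  fixes x y z K e \<delta> p :: real
  assumes "p \<ge> 0" "0 \<le> \<delta>" "\<delta> \<le> 1/2" "K \<ge> 0" "e \<ge> 0"
    and "\<bar>x\<bar> \<le> K * e" "\<bar>y\<bar> \<le> K" "\<bar>z\<bar> \<le> K * e"
  shows "1/2 * \<bar>x\<bar> powr p + \<delta> * \<bar>y\<bar> powr p + (1/2 - \<delta>) * \<bar>z\<bar> powr p \<le> K powr p * (e powr p + \<delta>)"
proof -
  have x: "\<bar>x\<bar> powr p \<le> K powr p * e powr p" and z: "\<bar>z\<bar> powr p \<le> K powr p * e powr p"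
    using assms by (simp_all add: powr_mono2 flip: powr_mult)
  have y: "\<bar>y\<bar> powr p \<le> K powr p"
    using assms by (simp add: powr_mono2)
  have "1/2 * \<bar>x\<bar> powr p + \<delta> * \<bar>y\<bar> powr p + (1/2 - \<delta>) * \<bar>z\<bar> powr p
      \<le> 1/2 * (K powr p * e powr p) + \<delta> * K powr p + (1/2 - \<delta>) * (K powr p * e powr p)"
    using assms x y z by (intro add_mono mult_left_mono) auto
  also have "\<dots> \<le> K powr p * (e powr p + \<delta>)"
    using assms by (simp add: algebra_simps)
  finally show ?thesis .
qed

text \<open>The values of P_{B_n} f - P_{B_0} f on the cells {X_0 = 1}, {X_0 = 0, X_n = 1} and
  {X_0 = 0, X_n = 0}, where a, d, c are the integrals of f over these cells, whose probabilities are
  1/2, \<delta>, 1/2 - \<delta>; u bounds |a| and |c|, and u e bounds |d|.\<close>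

lemma diff_on_X0_cell_le:
  fixes a d \<delta> u e :: real
  assumes "0 < \<delta>" "\<bar>a\<bar> \<le> u" "\<bar>d\<bar> \<le> u * e" "\<delta> \<le> e"
  shows "\<bar>(a + d) / (1/2 + \<delta>) - a / (1/2)\<bar> \<le> 6 * u * e"
proof -
  have u: "0 \<le> u" using assms(2) by linarith
  have "\<bar>d - 2 * a * \<delta>\<bar> \<le> \<bar>d\<bar> + 2 * \<bar>a\<bar> * \<delta>"
    using abs_triangle_ineq4[of d "2 * a * \<delta>"] assms(1) by (simp add: abs_mult)
  also have "\<dots> \<le> u * e + 2 * u * e"
    using assms u by (intro add_mono mult_mono) auto
  finally have "\<bar>d - 2 * a * \<delta>\<bar> \<le> 3 * u * e" by (simp add: mult_ac)
  have "(a + d) / (1/2 + \<delta>) - a / (1/2) = (d - 2 * a * \<delta>) / (1/2 + \<delta>)"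
    using assms(1) by (simp add: field_simps)
  then have "\<bar>(a + d) / (1/2 + \<delta>) - a / (1/2)\<bar> = \<bar>d - 2 * a * \<delta>\<bar> / (1/2 + \<delta>)"
    using assms(1) by (simp add: abs_divide)
  also have "\<dots> \<le> \<bar>d - 2 * a * \<delta>\<bar> / (1/2)"
    using assms(1) by (intro divide_left_mono) auto
  finally show ?thesis
    using \<open>\<bar>d - 2 * a * \<delta>\<bar> \<le> 3 * u * e\<close> by simp
qed

lemma diff_on_Xn_cell_le:
  fixes a c d \<delta> u e :: real
  assumes "0 < \<delta>" "\<bar>a\<bar> \<le> u" "\<bar>c\<bar> \<le> u" "\<bar>d\<bar> \<le> u * e" "e \<le> 1"
  shows "\<bar>(a + d) / (1/2 + \<delta>) - (d + c) / (1/2)\<bar> \<le> 8 * u"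
proof -
  have d: "\<bar>d\<bar> \<le> u"
    using assms by (smt (verit) mult_left_le)
  have "\<bar>(a + d) / (1/2 + \<delta>)\<bar> \<le> \<bar>a + d\<bar> / (1/2)"
    using assms(1) divide_left_mono[of "1/2" "1/2 + \<delta>" "\<bar>a + d\<bar>"] by (simp add: abs_divide)
  also have "\<dots> \<le> 4 * u"
    using assms(2) d by simp
  finally have "\<bar>(a + d) / (1/2 + \<delta>)\<bar> \<le> 4 * u" .
  moreover have "\<bar>(d + c) / (1/2)\<bar> \<le> 4 * u"
    using assms(3) d by simp
  moreover have "\<bar>x - y\<bar> \<le> 8 * u" if "\<bar>x\<bar> \<le> 4 * u" "\<bar>y\<bar> \<le> 4 * u" for x y :: real
    using that by linarith
  ultimately show ?thesis
    by blast
qed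

lemma diff_on_neither_cell_le:
  fixes c d \<delta> u e :: real
  assumes "0 < \<delta>" "\<delta> \<le> 1/4" "\<bar>c\<bar> \<le> u" "\<bar>d\<bar> \<le> u * e" "\<delta> \<le> e"
  shows "\<bar>c / (1/2 - \<delta>) - (d + c) / (1/2)\<bar> \<le> 16 * u * e"
proof -
  have u: "0 \<le> u" using assms(3) by linarith
  have "\<bar>2 * c * \<delta>\<bar> \<le> 2 * u * e"
    using assms u by (simp add: abs_mult mult_mono)
  moreover have "\<bar>2 * d * \<delta>\<bar> \<le> u * e"
    using assms mult_mono[of "\<bar>d\<bar>" "u * e" "2 * \<delta>" 1] by (simp add: abs_mult)
  ultimately have num: "\<bar>2 * c * \<delta> - d + 2 * d * \<delta>\<bar> \<le> 4 * u * e"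
    using assms(4) by linarith
  have "c / (1/2 - \<delta>) - (d + c) / (1/2) = (2 * c * \<delta> - d + 2 * d * \<delta>) / (1/2 - \<delta>)"
    using assms(1,2) by (simp add: field_simps)
  then have "\<bar>c / (1/2 - \<delta>) - (d + c) / (1/2)\<bar> = \<bar>2 * c * \<delta> - d + 2 * d * \<delta>\<bar> / (1/2 - \<delta>)"
    using assms(2) by (simp add: abs_divide)
  also have "\<dots> \<le> \<bar>2 * c * \<delta> - d + 2 * d * \<delta>\<bar> / (1/4)"
    using assms(2) by (intro divide_left_mono) auto
  finally show ?thesis
    using num by simp
qed

lemma cell_differences_powr_le:
  fixes a c d \<delta> u e p :: real
  assumes "p \<ge> 0" "0 < \<delta>" "\<delta> \<le> 1/4" "\<bar>a\<bar> \<le> u" "\<bar>c\<bar> \<le> u" "\<bar>d\<bar> \<le> u * e" "\<delta> \<le> e" "e \<le> 1"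
  shows "1/2 * \<bar>(a + d) / (1/2 + \<delta>) - a / (1/2)\<bar> powr p
      + \<delta> * \<bar>(a + d) / (1/2 + \<delta>) - (d + c) / (1/2)\<bar> powr p
      + (1/2 - \<delta>) * \<bar>c / (1/2 - \<delta>) - (d + c) / (1/2)\<bar> powr p
    \<le> (20 * u) powr p * (e powr p + \<delta>)"
proof (rule weighted_powr_sum_le)
  have u: "u \<ge> 0" and e: "e \<ge> 0"
    using assms by linarith+
  then show "20 * u \<ge> 0" "e \<ge> 0"
    by simp_all
  show "\<bar>(a + d) / (1/2 + \<delta>) - a / (1/2)\<bar> \<le> 20 * u * e"
    using diff_on_X0_cell_le[of \<delta> a u d e] assms u e
    by (smt (verit) mult_nonneg_nonneg mult_right_mono)
  show "\<bar>(a + d) / (1/2 + \<delta>) - (d + c) / (1/2)\<bar> \<le> 20 * u"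
    using diff_on_Xn_cell_le[of \<delta> a u c d e] assms u by linarith
  show "\<bar>c / (1/2 - \<delta>) - (d + c) / (1/2)\<bar> \<le> 20 * u * e"
    using diff_on_neither_cell_le[of \<delta> c u d e] assms u e
    by (smt (verit) mult_nonneg_nonneg mult_right_mono)
qed (use assms in auto)

lemma dyadic_powr_sum_le:
  fixes p :: real
  assumes "p > 1"
  shows "(1 / 2^(n+1)) powr (p - 1) + 1 / 2^(n+1) \<le> 2 * 2 powr (- real n * min (p - 1) 1)"
proof -
  define m where "m = min (p - 1) 1"
  have m: "m \<le> p - 1" "m \<le> 1" "0 \<le> m"
    unfolding m_def using assms by auto
  have "(2::real) powr (real n + 1) = 2^(n+1)"
    using powr_realpow[of 2 "n+1"] by (simp add: add.commute)
  then have dyadic: "1 / 2^(n+1) = (2::real) powr (- (real n + 1))"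
    using powr_minus[of 2 "real n + 1"] by (simp add: field_simps)
  have "(2::real) powr (- (real n + 1) * (p - 1)) \<le> 2 powr (- real n * m)"
  proof (rule powr_mono)
    have "real n * m \<le> real n * (p - 1)"
      using m by (intro mult_left_mono) auto
    also have "\<dots> \<le> (real n + 1) * (p - 1)"
      using assms by (intro mult_right_mono) auto
    finally show "- (real n + 1) * (p - 1) \<le> - real n * m"
      by (simp add: algebra_simps)
  qed simp
  moreover have "(2::real) powr (- (real n + 1)) \<le> 2 powr (- real n * m)"
  proof (rule powr_mono)
    have "real n * m \<le> real n * 1"
      using m by (intro mult_left_mono) auto
    then show "- (real n + 1) \<le> - real n * m"
      by simp
  qed simp
  moreover have "(1 / 2^(n+1)) powr (p - 1) = (2::real) powr (- (real n + 1) * (p - 1))"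
    unfolding dyadic by (rule powr_powr)
  ultimately show ?thesis
    unfolding dyadic m_def by linarith
qed

lemma prob_space_PP: "prob_space PP"
  unfolding PP_def by (intro prob_space_PiM prob_space_measure_pmf)

interpretation PP: prob_space PP
  by (rule prob_space_PP)

lemma space_PP [simp]: "space PP = UNIV"
  by (simp add: PP_def space_PiM)

lemma measurable_PP_coordinate [measurable]: "(\<lambda>\<omega>. \<omega> i) \<in> measurable PP (count_space UNIV)"
proof -
  have "(\<lambda>\<omega>. \<omega> i) \<in> measurable PP (measure_pmf (bernoulli_pmf (bern_param i)))"
    unfolding PP_def by (rule measurable_component_singleton) simp
  then show ?thesis by (simp cong: measurable_cong_sets)
qed

lemma measure_PP_cylinder:
  assumes "finite I"
  shows "measure PP {\<omega>. \<forall>i\<in>I. \<omega> i = b i} = (\<Prod>i\<in>I. pmf (bernoulli_pmf (bern_param i)) (b i))"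
proof -
  have cyl: "{\<omega>. \<forall>i\<in>I. \<omega> i = b i} =
      prod_emb UNIV (\<lambda>i. measure_pmf (bernoulli_pmf (bern_param i))) I (PiE I (\<lambda>i. {b i}))"
    unfolding prod_emb_def space_PiM space_measure_pmf PiE_UNIV
    by (simp add: restrict_PiE_iff set_eq_iff Pi_iff)
  have "emeasure PP {\<omega>. \<forall>i\<in>I. \<omega> i = b i} =
      (\<Prod>i\<in>I. emeasure (measure_pmf (bernoulli_pmf (bern_param i))) {b i})"
    unfolding cyl PP_def using assms by (intro emeasure_PiM_emb prob_space_measure_pmf) auto
  also have "\<dots> = ennreal (\<Prod>i\<in>I. pmf (bernoulli_pmf (bern_param i)) (b i))"
    by (simp add: emeasure_pmf_single prod_ennreal)
  finally show ?thesis
    by (simp add: measure_def prod_nonneg)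
qed

lemma measure_PP_two_coordinates:
  assumes "i \<noteq> j"
  shows "measure PP {\<omega>. \<omega> i = b \<and> \<omega> j = c} =
    pmf (bernoulli_pmf (bern_param i)) b * pmf (bernoulli_pmf (bern_param j)) c"
  using measure_PP_cylinder[of "{i, j}" "\<lambda>k. if k = i then b else c"] assms
  by (simp add: conj_commute)

lemma integral_PP_two_coordinates:
  fixes \<phi> :: "bool \<Rightarrow> bool \<Rightarrow> real"
  assumes "i \<noteq> j"
  shows "(\<integral>\<omega>. \<phi> (\<omega> i) (\<omega> j) \<partial>PP) =
    (\<Sum>b\<in>UNIV. \<Sum>c\<in>UNIV. pmf (bernoulli_pmf (bern_param i)) b * pmf (bernoulli_pmf (bern_param j)) c * \<phi> b c)"
proof -
  let ?cell = "\<lambda>b c. {\<omega>. \<omega> i = b \<and> \<omega> j = c}"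
  have sum_bool: "(\<Sum>b\<in>UNIV. f b) = f True + f False" for f :: "bool \<Rightarrow> real"
    by (simp add: UNIV_bool)
  have cell_int: "integrable PP (\<lambda>\<omega>. indicator (?cell b c) \<omega> * \<phi> b c)" for b c
  proof -
    have "{\<omega>\<in>space PP. \<omega> i = b \<and> \<omega> j = c} \<in> sets PP"
      by measurable
    then show ?thesis
      by (intro integrable_mult_left integrable_real_indicator) (simp_all add: less_top[symmetric])
  qed
  have "\<phi> (\<omega> i) (\<omega> j) = (\<Sum>b\<in>UNIV. \<Sum>c\<in>UNIV. indicator (?cell b c) \<omega> * \<phi> b c)" for \<omega>
    unfolding sum_bool by (cases "\<omega> i"; cases "\<omega> j") simp_all
  then have "(\<integral>\<omega>. \<phi> (\<omega> i) (\<omega> j) \<partial>PP) =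
      (\<integral>\<omega>. (\<Sum>b\<in>UNIV. \<Sum>c\<in>UNIV. indicator (?cell b c) \<omega> * \<phi> b c) \<partial>PP)"
    by simp
  also have "\<dots> = (\<Sum>b\<in>UNIV. \<integral>\<omega>. (\<Sum>c\<in>UNIV. indicator (?cell b c) \<omega> * \<phi> b c) \<partial>PP)"
    by (intro Bochner_Integration.integral_sum Bochner_Integration.integrable_sum cell_int)
  also have "\<dots> = (\<Sum>b\<in>UNIV. \<Sum>c\<in>UNIV. \<integral>\<omega>. indicator (?cell b c) \<omega> * \<phi> b c \<partial>PP)"
    by (intro sum.cong refl Bochner_Integration.integral_sum cell_int)
  also have "\<dots> = (\<Sum>b\<in>UNIV. \<Sum>c\<in>UNIV. measure PP (?cell b c) * \<phi> b c)"
    by simp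
  finally show ?thesis
    using assms by (simp add: measure_PP_two_coordinates)
qed

lemma vimage_Y_cases: "Y n -` A \<in> {{}, {\<omega>. Y n \<omega>}, UNIV - {\<omega>. Y n \<omega>}, UNIV}"
proof -
  have "\<omega> \<in> Y n -` A \<longleftrightarrow> (Y n \<omega> \<and> True \<in> A) \<or> (\<not> Y n \<omega> \<and> False \<in> A)" for \<omega>
    by (cases "Y n \<omega>") simp_all
  then have "Y n -` A = {\<omega>. (Y n \<omega> \<and> True \<in> A) \<or> (\<not> Y n \<omega> \<and> False \<in> A)}"
    by (intro set_eqI) (simp only: mem_Collect_eq)
  then show ?thesis
    by (cases "True \<in> A"; cases "False \<in> A") (simp_all add: set_diff_eq)
qed

lemma sets_BB: "sets (BB n) = sigma_sets UNIV ({Y n -` A | A. A \<subseteq> UNIV} \<union> null_sets PP)"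
  unfolding BB_def by (subst sets_measure_of) auto

lemma sets_BB_subset_ae_closure:
  "sets (BB n) \<subseteq> ae_closure PP {{}, {\<omega>. Y n \<omega>}, UNIV - {\<omega>. Y n \<omega>}, UNIV}"
  unfolding sets_BB
proof (rule sigma_algebra.sigma_sets_subset)
  let ?\<Sigma> = "{{}, {\<omega>. Y n \<omega>}, UNIV - {\<omega>. Y n \<omega>}, UNIV}"
  have "{\<omega>\<in>space PP. \<omega> 0 \<or> \<omega> n} \<in> sets PP"
    by measurable
  then have Y_sets: "{\<omega>. Y n \<omega>} \<in> sets PP"
    by (simp add: Y_def)
  then have \<Sigma>: "?\<Sigma> \<subseteq> sets PP"
    using sets.compl_sets[OF Y_sets] sets.top[of PP] by simp
  show "sigma_algebra UNIV (ae_closure PP ?\<Sigma>)"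
    using sigma_algebra_ae_closure[OF _ \<Sigma>] sigma_algebra_single_set[of "{\<omega>. Y n \<omega>}" UNIV]
    by simp
  show "{Y n -` A | A. A \<subseteq> UNIV} \<union> null_sets PP \<subseteq> ae_closure PP ?\<Sigma>"
  proof
    fix B assume "B \<in> {Y n -` A | A. A \<subseteq> UNIV} \<union> null_sets PP"
    then consider A where "B = Y n -` A" | "B \<in> null_sets PP"
      by blast
    then show "B \<in> ae_closure PP ?\<Sigma>"
    proof cases
      case 1
      have "B \<in> ?\<Sigma>"
        unfolding 1 by (rule vimage_Y_cases)
      moreover from this have "B \<in> sets PP"
        by (rule subsetD[OF \<Sigma>])
      ultimately show ?thesis
        unfolding ae_closure_def by (intro CollectI conjI bexI[of _ B]) simp_all
    next
      case 2
      then show ?thesis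
        unfolding ae_closure_def by (auto intro!: bexI[of _ "{}"])
    qed
  qed
qed

lemma set_Y_in_BB: "{\<omega>. Y n \<omega>} \<in> sets (BB n)"
proof -
  have "{\<omega>. Y n \<omega>} = Y n -` {True}"
    by auto
  then have "{\<omega>. Y n \<omega>} \<in> {Y n -` A | A. A \<subseteq> UNIV}"
    by blast
  then show ?thesis
    unfolding sets_BB by (intro sigma_sets.Basic UnI1)
qed

lemma subalgebra_BB: "subalgebra PP (BB n)"
  unfolding subalgebra_def
proof
  show "sets (BB n) \<subseteq> sets PP"
    using sets_BB_subset_ae_closure[of n] unfolding ae_closure_def by blast
  show "space (BB n) = space PP"
    by (simp add: BB_def space_measure_of_conv)
qed

lemma real_cond_exp_BB:
  assumes "integrable PP f"
  shows "AE \<omega> in PP. real_cond_exp PP (BB n) f \<omega> =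
    (if Y n \<omega> then (\<integral>x\<in>{\<omega>. Y n \<omega>}. f x \<partial>PP) / PP.prob {\<omega>. Y n \<omega>}
     else (\<integral>x\<in>{\<omega>. \<not> Y n \<omega>}. f x \<partial>PP) / PP.prob {\<omega>. \<not> Y n \<omega>})"
proof -
  have compl: "space PP - {\<omega>. Y n \<omega>} = {\<omega>. \<not> Y n \<omega>}"
    by auto
  have "sets (BB n) \<subseteq> ae_closure PP {{}, {\<omega>. Y n \<omega>}, space PP - {\<omega>. Y n \<omega>}, space PP}"
    using sets_BB_subset_ae_closure by simp
  from PP.real_cond_exp_two_cells[OF subalgebra_BB set_Y_in_BB this assms]
  show ?thesis
    unfolding compl mem_Collect_eq .
qed

lemma sets_PP_cells:
  "{\<omega>. \<omega> 0} \<in> sets PP" "{\<omega>. \<not> \<omega> 0 \<and> \<omega> n} \<in> sets PP" "{\<omega>. \<not> \<omega> 0 \<and> \<not> \<omega> n} \<in> sets PP"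
proof -
  have "{\<omega>\<in>space PP. \<omega> 0} \<in> sets PP" "{\<omega>\<in>space PP. \<not> \<omega> 0 \<and> \<omega> n} \<in> sets PP"
    "{\<omega>\<in>space PP. \<not> \<omega> 0 \<and> \<not> \<omega> n} \<in> sets PP"
    by measurable
  then show "{\<omega>. \<omega> 0} \<in> sets PP" "{\<omega>. \<not> \<omega> 0 \<and> \<omega> n} \<in> sets PP"
    "{\<omega>. \<not> \<omega> 0 \<and> \<not> \<omega> n} \<in> sets PP"
    by simp_all
qed

lemma prob_PP_cells:
  assumes "n \<ge> 1"
  shows "PP.prob {\<omega>. \<not> \<omega> 0 \<and> \<omega> n} = 1/2^(n+1)"
    and "PP.prob {\<omega>. \<not> \<omega> 0 \<and> \<not> \<omega> n} = 1/2 - 1/2^(n+1)"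
  using measure_PP_two_coordinates[of 0 n False True] measure_PP_two_coordinates[of 0 n False False] assms
  by (simp_all add: bern_param_def field_simps)

lemma prob_not_Y:
  assumes "n \<ge> 1"
  shows "PP.prob {\<omega>. \<not> Y n \<omega>} = 1/2 - 1/2^(n+1)"
  using prob_PP_cells(2)[OF assms] by (simp add: Y_def)

lemma prob_Y:
  assumes "n \<ge> 1"
  shows "PP.prob {\<omega>. Y n \<omega>} = 1/2 + 1/2^(n+1)"
proof -
  have "{\<omega>\<in>space PP. Y n \<omega>} \<in> sets PP"
    unfolding Y_def by measurable
  then have "PP.prob {\<omega>. Y n \<omega>} = 1 - PP.prob {\<omega>. \<not> Y n \<omega>}"
    using PP.prob_compl[of "{\<omega>. Y n \<omega>}"] by (simp add: set_diff_eq)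
  then show ?thesis
    using prob_not_Y[OF assms] by simp
qed

lemma prob_Y0: "PP.prob {\<omega>. Y 0 \<omega>} = 1/2" and prob_not_Y0: "PP.prob {\<omega>. \<not> Y 0 \<omega>} = 1/2"
  using measure_PP_cylinder[of "{0}" "\<lambda>_. True"] measure_PP_cylinder[of "{0}" "\<lambda>_. False"]
  by (simp_all add: Y_def bern_param_def)

lemma set_integral_Y_cells:
  fixes f :: "(nat \<Rightarrow> bool) \<Rightarrow> real"
  assumes f: "integrable PP f"
  shows "(\<integral>x\<in>{\<omega>. Y n \<omega>}. f x \<partial>PP) =
      (\<integral>x\<in>{\<omega>. \<omega> 0}. f x \<partial>PP) + (\<integral>x\<in>{\<omega>. \<not> \<omega> 0 \<and> \<omega> n}. f x \<partial>PP)" (is ?Y)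
    and "(\<integral>x\<in>{\<omega>. \<not> Y 0 \<omega>}. f x \<partial>PP) =
      (\<integral>x\<in>{\<omega>. \<not> \<omega> 0 \<and> \<omega> n}. f x \<partial>PP) + (\<integral>x\<in>{\<omega>. \<not> \<omega> 0 \<and> \<not> \<omega> n}. f x \<partial>PP)"
      (is ?not_Y0)
proof -
  have "{\<omega>. Y n \<omega>} = {\<omega>. \<omega> 0} \<union> {\<omega>. \<not> \<omega> 0 \<and> \<omega> n}"
    and "{\<omega>. \<not> Y 0 \<omega>} = {\<omega>. \<not> \<omega> 0 \<and> \<omega> n} \<union> {\<omega>. \<not> \<omega> 0 \<and> \<not> \<omega> n}"
    by (auto simp: Y_def)
  then show ?Y and ?not_Y0
    using sets_PP_cells(1) sets_PP_cells(2,3)[of n] by (auto intro!: set_integral_Un_of_integrable[OF f])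
qed

lemma integral_cond_exp_diff_BB:
  fixes f :: "(nat \<Rightarrow> bool) \<Rightarrow> real"
  assumes n: "n \<ge> 1" and f: "integrable PP f"
  defines "\<delta> \<equiv> 1/2^(n+1)"
    and "a \<equiv> \<integral>x\<in>{\<omega>. \<omega> 0}. f x \<partial>PP"
    and "d \<equiv> \<integral>x\<in>{\<omega>. \<not> \<omega> 0 \<and> \<omega> n}. f x \<partial>PP"
    and "c \<equiv> \<integral>x\<in>{\<omega>. \<not> \<omega> 0 \<and> \<not> \<omega> n}. f x \<partial>PP"
  shows "(\<integral>\<omega>. \<bar>real_cond_exp PP (BB n) f \<omega> - real_cond_exp PP (BB 0) f \<omega>\<bar> powr p \<partial>PP) =
    1/2 * \<bar>(a + d) / (1/2 + \<delta>) - a / (1/2)\<bar> powr p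
    + \<delta> * \<bar>(a + d) / (1/2 + \<delta>) - (d + c) / (1/2)\<bar> powr p
    + (1/2 - \<delta>) * \<bar>c / (1/2 - \<delta>) - (d + c) / (1/2)\<bar> powr p"
proof -
  have int_Y: "(\<integral>x\<in>{\<omega>. Y n \<omega>}. f x \<partial>PP) = a + d"
    and int_not_Y0: "(\<integral>x\<in>{\<omega>. \<not> Y 0 \<omega>}. f x \<partial>PP) = d + c"
    unfolding a_def c_def d_def by (rule set_integral_Y_cells[OF f])+
  have int_not_Y: "(\<integral>x\<in>{\<omega>. \<not> Y n \<omega>}. f x \<partial>PP) = c"
    and int_Y0: "(\<integral>x\<in>{\<omega>. Y 0 \<omega>}. f x \<partial>PP) = a"
    by (simp_all add: a_def c_def Y_def)
  define \<phi> where "\<phi> b b' = \<bar>(if b \<or> b' then (a + d) / (1/2 + \<delta>) else c / (1/2 - \<delta>))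
      - (if b then a / (1/2) else (d + c) / (1/2))\<bar> powr p" for b b'
  have "AE \<omega> in PP. \<bar>real_cond_exp PP (BB n) f \<omega> - real_cond_exp PP (BB 0) f \<omega>\<bar> powr p = \<phi> (\<omega> 0) (\<omega> n)"
    using real_cond_exp_BB[OF f, of n] real_cond_exp_BB[OF f, of 0]
    by eventually_elim
      (simp only: int_Y int_not_Y int_Y0 int_not_Y0 prob_Y[OF n] prob_not_Y[OF n] prob_Y0 prob_not_Y0,
       simp add: \<phi>_def Y_def \<delta>_def)
  then have "(\<integral>\<omega>. \<bar>real_cond_exp PP (BB n) f \<omega> - real_cond_exp PP (BB 0) f \<omega>\<bar> powr p \<partial>PP)
      = (\<integral>\<omega>. \<phi> (\<omega> 0) (\<omega> n) \<partial>PP)"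
    by (intro integral_cong_AE) measurable
  also have "\<dots> = (\<Sum>b\<in>UNIV. \<Sum>b'\<in>UNIV.
      pmf (bernoulli_pmf (bern_param 0)) b * pmf (bernoulli_pmf (bern_param n)) b' * \<phi> b b')"
    using n by (intro integral_PP_two_coordinates) simp
  also have "\<dots> = 1/2 * \<phi> True True + \<delta> * \<phi> False True + (1/2 - \<delta>) * \<phi> False False"
  proof -
    have "\<phi> True False = \<phi> True True"
      by (simp add: \<phi>_def)
    then show ?thesis
      using n by (simp add: UNIV_bool bern_param_def \<delta>_def field_simps)
  qed
  finally show ?thesis
    by (simp only: \<phi>_def if_True if_False simp_thms)
qed

lemma abs_set_integral_PP_cells_le:
  fixes f :: "(nat \<Rightarrow> bool) \<Rightarrow> real" and p :: real
  assumes p: "p > 1" and n: "n \<ge> 1" and f: "Lp_fun p f"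
  defines "u \<equiv> (\<integral>\<omega>. \<bar>f \<omega>\<bar> powr p \<partial>PP) powr (1/p)" and "\<delta> \<equiv> 1 / 2^(n+1)"
  shows "\<bar>\<integral>x\<in>{\<omega>. \<omega> 0}. f x \<partial>PP\<bar> \<le> u"
    and "\<bar>\<integral>x\<in>{\<omega>. \<not> \<omega> 0 \<and> \<not> \<omega> n}. f x \<partial>PP\<bar> \<le> u"
    and "\<bar>\<integral>x\<in>{\<omega>. \<not> \<omega> 0 \<and> \<omega> n}. f x \<partial>PP\<bar> \<le> u * \<delta> powr (1 - 1/p)"
proof -
  have hoelder: "\<bar>\<integral>x\<in>A. f x \<partial>PP\<bar> \<le> u * PP.prob A powr (1 - 1/p)"
    if "A \<in> sets PP" "PP.prob A > 0" for A
    unfolding u_def using p f that by (intro PP.abs_set_integral_le_powr) (auto simp: Lp_fun_def)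
  have \<delta>: "0 < \<delta>" "\<delta> \<le> 1/4"
    using n power_increasing[of 2 "n+1" "2::real"] unfolding \<delta>_def by auto
  have prob_cells: "PP.prob {\<omega>. \<omega> 0} = 1/2" "PP.prob {\<omega>. \<not> \<omega> 0 \<and> \<omega> n} = \<delta>"
    "PP.prob {\<omega>. \<not> \<omega> 0 \<and> \<not> \<omega> n} = 1/2 - \<delta>"
    using prob_Y0 prob_PP_cells[OF n] by (simp_all add: Y_def \<delta>_def)
  have "u * (1/2) powr (1 - 1/p) \<le> u" "u * (1/2 - \<delta>) powr (1 - 1/p) \<le> u"
    unfolding u_def using \<delta> p by (auto intro!: mult_left_le powr_le1)
  then show "\<bar>\<integral>x\<in>{\<omega>. \<omega> 0}. f x \<partial>PP\<bar> \<le> u"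
    and "\<bar>\<integral>x\<in>{\<omega>. \<not> \<omega> 0 \<and> \<not> \<omega> n}. f x \<partial>PP\<bar> \<le> u"
    and "\<bar>\<integral>x\<in>{\<omega>. \<not> \<omega> 0 \<and> \<omega> n}. f x \<partial>PP\<bar> \<le> u * \<delta> powr (1 - 1/p)"
    using hoelder[OF sets_PP_cells(1)] hoelder[OF sets_PP_cells(3)[of n]] hoelder[OF sets_PP_cells(2)[of n]]
    unfolding prob_cells using \<delta> by simp_all
qed

lemma cond_exp_diff_BB_le:
  fixes f :: "(nat \<Rightarrow> bool) \<Rightarrow> real" and p :: real
  assumes p: "p > 1" and n: "n \<ge> 1" and f: "Lp_fun p f"
  shows "(\<integral>\<omega>. \<bar>real_cond_exp PP (BB n) f \<omega> - real_cond_exp PP (BB 0) f \<omega>\<bar> powr p \<partial>PP)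
    \<le> 2 * 20 powr p * 2 powr (- real n * min (p - 1) 1) * (\<integral>\<omega>. \<bar>f \<omega>\<bar> powr p \<partial>PP)"
proof -
  have f_int: "integrable PP f"
    using p f unfolding Lp_fun_def by (auto intro: PP.integrable_of_integrable_powr[of p])
  define \<delta> :: real where "\<delta> = 1 / 2^(n+1)"
  define F where "F = (\<integral>\<omega>. \<bar>f \<omega>\<bar> powr p \<partial>PP)"
  define e where "e = \<delta> powr (1 - 1/p)"
  have \<delta>: "0 < \<delta>" "\<delta> \<le> 1/4"
    using n power_increasing[of 2 "n+1" "2::real"] unfolding \<delta>_def by auto
  have "\<delta> powr 1 \<le> \<delta> powr (1 - 1/p)"
    using \<delta> p by (intro powr_mono') auto
  moreover have "0 \<le> 1 - 1/p" "1 - 1/p \<le> 1"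
    using p by auto
  ultimately have e: "\<delta> \<le> e" "e \<le> 1"
    unfolding e_def using \<delta> by (auto intro: powr_le1)
  have "(\<integral>\<omega>. \<bar>real_cond_exp PP (BB n) f \<omega> - real_cond_exp PP (BB 0) f \<omega>\<bar> powr p \<partial>PP)
      \<le> (20 * F powr (1/p)) powr p * (e powr p + \<delta>)"
    unfolding integral_cond_exp_diff_BB[OF n f_int, folded \<delta>_def] F_def e_def
    using abs_set_integral_PP_cells_le[OF p n f, folded \<delta>_def] p \<delta> e[unfolded e_def]
    by (intro cell_differences_powr_le) auto
  also have "\<dots> = 20 powr p * F * ((1 / 2^(n+1)) powr (p - 1) + 1 / 2^(n+1))"
    unfolding e_def \<delta>_def F_def using p
    by (simp add: powr_mult powr_powr algebra_simps)
  also have "\<dots> \<le> 20 powr p * F * (2 * 2 powr (- real n * min (p - 1) 1))"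
    unfolding F_def using p by (intro mult_left_mono dyadic_powr_sum_le) auto
  finally show ?thesis
    unfolding F_def by (simp add: mult_ac)
qed

lemma set_X0_notin_BB:
  assumes n: "n \<ge> 1"
  shows "{\<omega>. \<omega> 0} \<notin> sets (BB n)"
proof
  assume "{\<omega>. \<omega> 0} \<in> sets (BB n)"
  then obtain T where T: "T \<in> {{}, {\<omega>. Y n \<omega>}, UNIV - {\<omega>. Y n \<omega>}, UNIV}"
    and null: "sym_diff {\<omega>. \<omega> 0} T \<in> null_sets PP"
    using sets_BB_subset_ae_closure[of n] unfolding ae_closure_def by blast
  have "{\<omega>. \<omega> 0} \<subseteq> sym_diff {\<omega>. \<omega> 0} T \<or> {\<omega>. \<not> \<omega> 0 \<and> \<omega> n} \<subseteq> sym_diff {\<omega>. \<omega> 0} T"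
    using T by (auto simp: Y_def)
  then have "{\<omega>. \<omega> 0} \<in> null_sets PP \<or> {\<omega>. \<not> \<omega> 0 \<and> \<omega> n} \<in> null_sets PP"
    using null sets_PP_cells(1) sets_PP_cells(2)[of n] null_sets_subset by blast
  moreover have "PP.prob {\<omega>. \<omega> 0} = 1/2" "PP.prob {\<omega>. \<not> \<omega> 0 \<and> \<omega> n} = 1/2^(n+1)"
    using prob_Y0 prob_PP_cells(1)[OF n] by (simp_all add: Y_def)
  ultimately show False
    using measure_eq_0_null_sets by fastforce
qed

lemma BB_not_eventually_BB0: "\<not> (\<exists>N. \<forall>n\<ge>N. sets (BB n) = sets (BB 0))"
proof
  assume "\<exists>N. \<forall>n\<ge>N. sets (BB n) = sets (BB 0)"
  then obtain N where "\<And>n. n \<ge> N \<Longrightarrow> sets (BB n) = sets (BB 0)"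
    by blast
  then have "sets (BB (Suc N)) = sets (BB 0)"
    by simp
  moreover have "{\<omega>. \<omega> 0} \<in> sets (BB 0)"
    using set_Y_in_BB[of 0] by (simp add: Y_def)
  ultimately show False
    using set_X0_notin_BB[of "Suc N"] by simp
qed

lemma cond_diff_opnorm_le:
  fixes p :: real
  assumes p: "p > 1" and n: "n \<ge> 1"
  shows "0 \<le> cond_diff_opnorm p n"
    and "cond_diff_opnorm p n \<le> (2 * 20 powr p * 2 powr (- real n * min (p - 1) 1)) powr (1/p)"
proof -
  define K where "K = 2 * 20 powr p * 2 powr (- real n * min (p - 1) 1)"
  define B where "B = {f. Lp_fun p f \<and> (\<integral>x. \<bar>f x\<bar> powr p \<partial>PP) \<le> 1}"
  define G where "G f = (\<integral>x. \<bar>real_cond_exp PP (BB n) f x - real_cond_exp PP (BB 0) f x\<bar> powr p \<partial>PP) powr (1/p)"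
    for f
  have opnorm: "cond_diff_opnorm p n = (SUP f\<in>B. G f)"
    unfolding cond_diff_opnorm_def B_def G_def ..
  have zero: "(\<lambda>_. 0) \<in> B"
    unfolding B_def Lp_fun_def using p by simp
  have G_le: "G f \<le> K powr (1/p)" if "f \<in> B" for f
  proof -
    have f: "Lp_fun p f" "(\<integral>x. \<bar>f x\<bar> powr p \<partial>PP) \<le> 1"
      using that unfolding B_def by auto
    have "G f \<le> (K * (\<integral>x. \<bar>f x\<bar> powr p \<partial>PP)) powr (1/p)"
      unfolding G_def K_def using p by (intro powr_mono2 cond_exp_diff_BB_le[OF p n f(1)]) auto
    also have "\<dots> \<le> K powr (1/p)"
      using p f(2) by (intro powr_mono2) (auto simp: K_def intro: mult_left_le)
    finally show ?thesis .
  qed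
  show "cond_diff_opnorm p n \<le> (2 * 20 powr p * 2 powr (- real n * min (p - 1) 1)) powr (1/p)"
    unfolding opnorm K_def[symmetric] using zero G_le by (intro cSUP_least) auto
  show "0 \<le> cond_diff_opnorm p n"
    unfolding opnorm using zero G_le by (intro cSUP_upper2[of G B "\<lambda>_. 0"]) (auto simp: G_def bdd_above_def)
qed

lemma cond_diff_opnorm_tendsto_0:
  fixes p :: real
  assumes p: "p > 1"
  shows "(\<lambda>n. cond_diff_opnorm p n) \<longlonglongrightarrow> 0"
proof (rule real_tendsto_sandwich[where f = "\<lambda>_. 0"
    and h = "\<lambda>n. (2 * 20 powr p * 2 powr (- real n * min (p - 1) 1)) powr (1/p)"])
  define m where "m = min (p - 1) 1"
  have "(2::real) powr (- m) < 1"
    using p unfolding m_def by (simp add: powr_less_one)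
  then have "(\<lambda>n. ((2::real) powr (- m)) ^ n) \<longlonglongrightarrow> 0"
    by (intro LIMSEQ_realpow_zero) auto
  moreover have "(2::real) powr (- real n * m) = (2 powr (- m)) ^ n" for n
    by (simp add: powr_power mult_ac)
  ultimately have "(\<lambda>n. 2 * 20 powr p * 2 powr (- real n * m)) \<longlonglongrightarrow> 0"
    by (simp add: tendsto_mult_right_zero)
  then show "(\<lambda>n. (2 * 20 powr p * 2 powr (- real n * min (p - 1) 1)) powr (1/p)) \<longlonglongrightarrow> 0"
    unfolding m_def[symmetric] using p by (intro tendsto_zero_powrI[where b = "1/p"]) auto
  show "\<forall>\<^sub>F n in sequentially. 0 \<le> cond_diff_opnorm p n"
    "\<forall>\<^sub>F n in sequentially. cond_diff_opnorm p n \<le> (2 * 20 powr p * 2 powr (- real n * min (p - 1) 1)) powr (1/p)"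
    using cond_diff_opnorm_le[OF p] by (auto intro: eventually_sequentiallyI[of 1])
qed simp

theorem mainTheorem14:
  shows "\<not> (\<exists>N. \<forall>n\<ge>N. sets (BB n) = sets (BB 0)) \<and>
         (\<forall>p>1. (\<lambda>n. cond_diff_opnorm p n) \<longlonglongrightarrow> 0) \<and>
         (\<forall>p>(1::real). \<exists>C>0. \<forall>n\<ge>1. \<forall>f. Lp_fun p f \<longrightarrow>
           (\<integral>x. \<bar>real_cond_exp PP (BB n) f x - real_cond_exp PP (BB 0) f x\<bar> powr p \<partial>PP)
             \<le> C * 2 powr (- real n * min (p - 1) 1) * (\<integral>x. \<bar>f x\<bar> powr p \<partial>PP))"
proof (intro conjI allI impI)
  show "\<not> (\<exists>N. \<forall>n\<ge>N. sets (BB n) = sets (BB 0))"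
    by (rule BB_not_eventually_BB0)
  show "(\<lambda>n. cond_diff_opnorm p n) \<longlonglongrightarrow> 0" if "p > 1" for p :: real
    using that by (rule cond_diff_opnorm_tendsto_0)
  show "\<exists>C>0. \<forall>n\<ge>1. \<forall>f. Lp_fun p f \<longrightarrow>
      (\<integral>x. \<bar>real_cond_exp PP (BB n) f x - real_cond_exp PP (BB 0) f x\<bar> powr p \<partial>PP)
        \<le> C * 2 powr (- real n * min (p - 1) 1) * (\<integral>x. \<bar>f x\<bar> powr p \<partial>PP)" if "p > 1" for p :: real
    using cond_exp_diff_BB_le[OF that] by (intro exI[of _ "2 * 20 powr p"]) auto
qed
end
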